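(* Let $\lambda=(\lambda_1,\dots,\lambda_n)$ be a partition with $\lambda_n\ne0$, let $k$ be an integer with $0\le k\le\lambda_n$, and let $x=(x_1,\dots,x_n)\in\mathbb{C}^n$. Then $$W_{\lambda}(x;q,p,t,a,b)=\prod_{j=1}^{\lfloor n/2\rfloor}\frac{(qbt^{n-2j})_{2k}}{(qbt^{-1-n+2j})_{2k}}\prod_{i=1}^n\frac{(x_i^{-1})_k(ax_i)_k}{(qbx_i)_k(qb/(ax_i))_k}\;W_{\lambda-k^n}(xq^{-k};q,p,t,aq^{2k},bq^{2k}),$$ where $\lambda-k^n=(\lambda_1-k,\dots,\lambda_n-k)$ and $xq^{-k}=(x_1q^{-k},\dots,x_nq^{-k})$.
   Context: Fix $|p|<1$; parameters generic. $E(x)=(x;p)_\infty(p/x;p)_\infty$. For integer $m\ge0$, $(a)_m=\prod_{k=0}^{m-1}E(aq^k)$, for $m<0$, $(a)_m=1/(aq^m)_{-m}$; for a partition $\lambda$ with $n$ parts $(a)_\lambda=\prod_{i=1}^n(at^{1-i})_{\lambda_i}$; several arguments denote products; integer subscripts denote the single-integer symbol. For $n$-part partitions with $\lambda_1\ge\mu_1\ge\dots\ge\lambda_n\ge\mu_n$, $\lambda_{n+1}=\mu_{n+1}=0$, $H_{\lambda/\mu}(q,p,t,b)=\prod_{1\le i<j\le n}\Big\{\frac{(q^{\mu_i-\mu_{j-1}}t^{j-i})_{\mu_{j-1}-\lambda_j}(q^{\lambda_i+\lambda_j}t^{3-j-i}b)_{\mu_{j-1}-\lambda_j}}{(q^{\mu_i-\mu_{j-1}+1}t^{j-i-1})_{\mu_{j-1}-\lambda_j}(q^{\lambda_i+\lambda_j+1}t^{2-j-i}b)_{\mu_{j-1}-\lambda_j}}\frac{(q^{\lambda_i-\mu_{j-1}+1}t^{j-i-1})_{\mu_{j-1}-\lambda_j}}{(q^{\lambda_i-\mu_{j-1}}t^{j-i})_{\mu_{j-1}-\lambda_j}}\Big\}\prod_{1\le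 i<j-1\le n}\frac{(q^{\mu_i+\lambda_j+1}t^{1-j-i}b)_{\mu_{j-1}-\lambda_j}}{(q^{\mu_i+\lambda_j}t^{2-j-i}b)_{\mu_{j-1}-\lambda_j}}$; for $x\in\mathbb{C}$, $W_{\lambda/\mu}(x;q,p,t,a,b)=H_{\lambda/\mu}\frac{(x^{-1},ax)_\lambda(qbx/t,qb/(axt))_\mu}{(x^{-1},ax)_\mu(qbx,qb/(ax))_\lambda}\prod_{i=1}^n\frac{E(bt^{1-2i}q^{2\mu_i})}{E(bt^{1-2i})}\frac{(bt^{1-2i})_{\mu_i+\lambda_{i+1}}}{(bqt^{-2i})_{\mu_i+\lambda_{i+1}}}t^{i(\mu_i-\lambda_{i+1})}$ (zero if the interlacing fails); recursively $W_{\lambda/\mu}(y,z_1,\dots,z_\ell;q,p,t,a,b)=\sum_\nu W_{\lambda/\nu}(yt^{-\ell};q,p,t,at^{2\ell},bt^\ell)W_{\nu/\mu}(z_1,\dots,z_\ell;q,p,t,a,b)$ over $\nu$ with $\lambda_1\ge\nu_1\ge\dots\ge\lambda_n\ge\nu_n\ge0$; $W_\lambda=W_{\lambda/0}$. *)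

theory Defs
  imports "HOL-Analysis.Analysis"
begin

definition qpinf :: "complex \<Rightarrow> complex \<Rightarrow> complex" where
  "qpinf p x = prodinf (\<lambda>k. 1 - x * p ^ k)"

definition E :: "complex \<Rightarrow> complex \<Rightarrow> complex" where
  "E p x = qpinf p x * qpinf p (p / x)"

definition thpoch :: "complex \<Rightarrow> complex \<Rightarrow> complex \<Rightarrow> int \<Rightarrow> complex" where
  "thpoch p q a m =
     (if m \<ge> 0 then (\<Prod>k<nat m. E p (a * q ^ k))
      else 1 / (\<Prod>k<nat (- m). E p (a * q powi m * q ^ k)))"

text \<open>Partitions with n parts are lists of length n (entries lam!0 = lambda_1, ...).
  part lam i = lambda_i for 1 <= i <= n and 0 otherwise (so lambda_{n+1} = 0).\<close>
definition part :: "nat list \<Rightarrow> nat \<Rightarrow> int" where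
  "part lam i = (if 1 \<le> i \<and> i \<le> length lam then int (lam ! (i - 1)) else 0)"

definition ppoch :: "complex \<Rightarrow> complex \<Rightarrow> complex \<Rightarrow> complex \<Rightarrow> nat list \<Rightarrow> complex" where
  "ppoch p q t a lam = (\<Prod>i\<in>{1..length lam}. thpoch p q (a * t powi (1 - int i)) (part lam i))"

definition interlace :: "nat list \<Rightarrow> nat list \<Rightarrow> bool" where
  "interlace lam mu \<longleftrightarrow> length mu = length lam \<and>
     (\<forall>i\<in>{1..length lam}. part mu i \<le> part lam i \<and> part lam (i + 1) \<le> part mu i)"

definition Hfac :: "complex \<Rightarrow> complex \<Rightarrow> complex \<Rightarrow> complex \<Rightarrow> nat list \<Rightarrow> nat list \<Rightarrow> complex" where
  "Hfac q p t b lam mu =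
    (let n = length lam; L = part lam; M = part mu in
     (\<Prod>j\<in>{2..n}. \<Prod>i\<in>{1..<j}.
        (let m = M (j - 1) - L j in
          thpoch p q (q powi (M i - M (j - 1)) * t powi (int j - int i)) m
          * thpoch p q (q powi (L i + L j) * t powi (3 - int j - int i) * b) m
          / (thpoch p q (q powi (M i - M (j - 1) + 1) * t powi (int j - int i - 1)) m
             * thpoch p q (q powi (L i + L j + 1) * t powi (2 - int j - int i) * b) m)
          * thpoch p q (q powi (L i - M (j - 1) + 1) * t powi (int j - int i - 1)) m
          / thpoch p q (q powi (L i - M (j - 1)) * t powi (int j - int i)) m))
     * (\<Prod>j\<in>{3..n + 1}. \<Prod>i\<in>{1..<j - 1}.
        (let m = M (j - 1) - L j in
          thpoch p q (q powi (M i + L j + 1) * t powi (1 - int j - int i) * b) m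
          / thpoch p q (q powi (M i + L j) * t powi (2 - int j - int i) * b) m)))"

definition W1 :: "complex \<Rightarrow> complex \<Rightarrow> complex \<Rightarrow> complex \<Rightarrow> complex \<Rightarrow> complex
                  \<Rightarrow> nat list \<Rightarrow> nat list \<Rightarrow> complex" where
  "W1 x q p t a b lam mu =
    (if interlace lam mu then
       Hfac q p t b lam mu
       * (ppoch p q t (1 / x) lam * ppoch p q t (a * x) lam
          * ppoch p q t (q * b * x / t) mu * ppoch p q t (q * b / (a * x * t)) mu)
       / (ppoch p q t (1 / x) mu * ppoch p q t (a * x) mu
          * ppoch p q t (q * b * x) lam * ppoch p q t (q * b / (a * x)) lam)
       * (\<Prod>i\<in>{1..length lam}.
            E p (b * t powi (1 - 2 * int i) * q powi (2 * part mu i)) / E p (b * t powi (1 - 2 * int i))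
            * thpoch p q (b * t powi (1 - 2 * int i)) (part mu i + part lam (i + 1))
            / thpoch p q (b * q * t powi (- 2 * int i)) (part mu i + part lam (i + 1))
            * t powi (int i * (part mu i - part lam (i + 1))))
     else 0)"

fun Wm :: "complex list \<Rightarrow> complex \<Rightarrow> complex \<Rightarrow> complex \<Rightarrow> complex \<Rightarrow> complex
           \<Rightarrow> nat list \<Rightarrow> nat list \<Rightarrow> complex" where
  "Wm [] q p t a b lam mu = 0"
| "Wm [y] q p t a b lam mu = W1 y q p t a b lam mu"
| "Wm (y # z # zs) q p t a b lam mu =
     (let l = length (z # zs) in
      \<Sum>\<nu>\<in>{\<nu>. interlace lam \<nu>}.
        W1 (y * t powi (- int l)) q p t (a * t ^ (2 * l)) (b * t ^ l) lam \<nu>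
        * Wm (z # zs) q p t a b \<nu> mu)"

definition W :: "complex list \<Rightarrow> complex \<Rightarrow> complex \<Rightarrow> complex \<Rightarrow> complex \<Rightarrow> complex
                 \<Rightarrow> nat list \<Rightarrow> complex" where
  "W xs q p t a b lam = Wm xs q p t a b lam (replicate (length lam) 0)"

definition generic :: "complex \<Rightarrow> complex \<Rightarrow> complex \<Rightarrow> complex \<Rightarrow> complex \<Rightarrow> complex list \<Rightarrow> bool" where
  "generic p q t a b xs \<longleftrightarrow> q \<noteq> 0 \<and> t \<noteq> 0 \<and> a \<noteq> 0 \<and> b \<noteq> 0 \<and> (\<forall>x\<in>set xs. x \<noteq> 0) \<and>
     (\<forall>(i::int) (j::int) (k::int) (l::int) (r::int list). length r = length xs \<longrightarrow>
        (i, j, k, l, r) \<noteq> (0, 0, 0, 0, replicate (length xs) 0) \<longrightarrow>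
        E p (q powi i * t powi j * a powi k * b powi l * (\<Prod>m<length xs. (xs ! m) powi (r ! m))) \<noteq> 0)"

end

theory Submission
  imports Defs
begin

(*
  By the branching rule, W_lambda(x_1,...,x_n) is a sum over chains of successively interlacing
  partitions lambda = nu^(n), nu^(n-1), ..., nu^(0) = 0, and only chains in which nu^(l) has at
  most l parts contribute. Since lambda_n >= k, interlacing forces the first l parts of nu^(l)
  to be >= k, so subtracting k from them is a bijection onto the chains of lambda - k^n.

  Each branching step factorises: if lambda has at most l+1 parts and mu at most l, then
    W_{(lambda+k^(l+1))/(mu+k^l)}(x;a,b)
      = (t^(-l)/x)_k (a x t^(-l))_k / ((qbx)_k (qb/(ax))_k)
        * prod_(i=1..l) (qbt^(1-2i))_2k / (qbt^(-2i))_2k * W_{lambda/mu}(x q^(-k); a q^2k, b q^2k).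
  The H-factor is invariant, the Pochhammer symbols split as (c)_(lambda+k^m) = (c)_(k^m) (cq^k)_lambda,
  and the i-th diagonal factor yields E(cq^2k)/E(c) (c)_2k = (cq)_2k. The branching recursion uses
  x = y t^(-l), a t^(2l), b t^l, so the first factor becomes the factor of the variable y, and the
  diagonal factors of the n steps telescope to the product over j <= n div 2.
*)

lemma thpoch_of_nat: "thpoch p q a (int m) = (\<Prod>j<m. E p (a * q ^ j))"
  by (simp add: thpoch_def)

lemma thpoch_zero [simp]: "thpoch p q a 0 = 1"
  by (simp add: thpoch_def)

lemma thpoch_one [simp]: "thpoch p q a 1 = E p a"
  using thpoch_of_nat[of p q a 1] by simp

lemma thpoch_add_nat:
  "thpoch p q a (int m + int n) = thpoch p q a (int m) * thpoch p q (a * q ^ m) (int n)"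
proof -
  have "(\<Prod>j<m + n. E p (a * q ^ j)) = (\<Prod>j<m. E p (a * q ^ j)) * (\<Prod>j<n. E p (a * q ^ (j + m)))"
    using prod.atLeastLessThan_concat[of 0 m "m + n" "\<lambda>j. E p (a * q ^ j)"]
      prod.shift_bounds_nat_ivl[of "\<lambda>j. E p (a * q ^ j)" 0 m n]
    by (simp add: atLeast0LessThan add.commute)
  then show ?thesis
    by (simp add: thpoch_of_nat flip: of_nat_add) (simp add: power_add mult_ac)
qed

lemma thpoch_add:
  assumes "m \<ge> 0" "n \<ge> 0"
  shows "thpoch p q a (m + n) = thpoch p q a m * thpoch p q (a * q powi m) n"
  using thpoch_add_nat[of p q a "nat m" "nat n"] assms
  by (simp add: power_int_nonneg_exp)

lemma thpoch_shift_base: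
  assumes "E p c \<noteq> 0"
  shows "E p (c * q ^ n) / E p c * thpoch p q c (int n) = thpoch p q (c * q) (int n)"
proof -
  have "E p c * thpoch p q (c * q) (int n) = thpoch p q c (int 1 + int n)"
    using thpoch_add_nat[of p q c 1 n] by simp
  also have "\<dots> = thpoch p q c (int n) * E p (c * q ^ n)"
    using thpoch_add_nat[of p q c n 1] by (simp add: add.commute)
  finally show ?thesis
    using assms by (simp add: field_simps)
qed

definition E_nonzero_on_orbit :: "complex \<Rightarrow> complex \<Rightarrow> complex \<Rightarrow> complex \<Rightarrow> bool" where
  "E_nonzero_on_orbit p q t c \<longleftrightarrow> (\<forall>s r. E p (c * t powi s * q powi r) \<noteq> 0)"

lemma E_nonzero_on_orbitD: "E_nonzero_on_orbit p q t c \<Longrightarrow> E p c \<noteq> 0"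
  unfolding E_nonzero_on_orbit_def by (metis mult.right_neutral power_int_0_right)

lemma E_nonzero_on_orbit_mult:
  assumes "E_nonzero_on_orbit p q t c" "q \<noteq> 0" "t \<noteq> 0"
  shows "E_nonzero_on_orbit p q t (c * t powi s * q powi r)"
  unfolding E_nonzero_on_orbit_def
proof (intro allI)
  fix s' r'
  have "c * t powi s * q powi r * t powi s' * q powi r' = c * t powi (s + s') * q powi (r + r')"
    using assms(2,3) by (simp add: power_int_add mult_ac)
  then show "E p (c * t powi s * q powi r * t powi s' * q powi r') \<noteq> 0"
    using assms(1) unfolding E_nonzero_on_orbit_def by metis
qed

lemma thpoch_nonzero:
  assumes "E_nonzero_on_orbit p q t c" "m \<ge> 0"
  shows "thpoch p q c m \<noteq> 0"
proof -
  have "E p (c * q ^ j) \<noteq> 0" for j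
    using assms(1) unfolding E_nonzero_on_orbit_def
    by (metis power_int_0_right power_int_of_nat mult.right_neutral)
  then show ?thesis
    using assms(2) by (simp add: thpoch_def)
qed

lemma part_nonneg: "part lam i \<ge> 0"
  by (simp add: part_def)

lemma part_replicate_zero [simp]: "part (replicate n 0) i = 0"
  by (auto simp: part_def)

lemma interlace_length: "interlace lam nu \<Longrightarrow> length nu = length lam"
  by (simp add: interlace_def)

lemma interlace_nth_le:
  assumes "interlace lam nu" "j < length nu"
  shows "nu ! j \<le> lam ! j"
proof -
  have "part nu (Suc j) \<le> part lam (Suc j)"
    using assms unfolding interlace_def by auto
  then show ?thesis
    using assms unfolding interlace_def by (simp add: part_def)
qed

lemma finite_interlace: "finite {nu. interlace lam nu}"
proof (rule finite_subset)
  let ?N = "Max (insert 0 (set lam))"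
  show "{nu. interlace lam nu} \<subseteq> {nu. set nu \<subseteq> {0..?N} \<and> length nu = length lam}"
  proof clarify
    fix nu assume il: "interlace lam nu"
    have "nu ! j \<le> ?N" if "j < length nu" for j
      using interlace_nth_le[OF il that] that interlace_length[OF il]
      by (metis Max_ge finite_insert finite_set insertCI le_trans nth_mem)
    then show "set nu \<subseteq> {0..?N} \<and> length nu = length lam"
      using interlace_length[OF il] by (auto simp: in_set_conv_nth)
  qed
  show "finite {nu. set nu \<subseteq> {0..?N} \<and> length nu = length lam}"
    by (rule finite_lists_length_eq) simp
qed

definition at_most_parts :: "nat \<Rightarrow> nat list \<Rightarrow> bool" where
  "at_most_parts l lam \<longleftrightarrow> (\<forall>i>l. part lam i = 0)"

definition shift_parts :: "nat \<Rightarrow> nat \<Rightarrow> nat list \<Rightarrow> nat list" where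
  "shift_parts k m lam = map (\<lambda>i. if i < m then lam ! i + k else lam ! i) [0..<length lam]"

lemma length_shift_parts [simp]: "length (shift_parts k m lam) = length lam"
  by (simp add: shift_parts_def)

lemma shift_parts_zero [simp]: "shift_parts k 0 lam = lam"
  by (simp add: shift_parts_def map_nth)

lemma part_shift_parts:
  assumes "m \<le> length lam"
  shows "part (shift_parts k m lam) i = (if 1 \<le> i \<and> i \<le> m then part lam i + int k else part lam i)"
  using assms by (auto simp: part_def shift_parts_def)

lemma at_most_parts_shift_parts:
  assumes "m \<le> l" "m \<le> length lam"
  shows "at_most_parts l (shift_parts k m lam) \<longleftrightarrow> at_most_parts l lam"
  using assms by (simp add: at_most_parts_def part_shift_parts)

lemma inj_shift_parts: "inj (shift_parts k m)"
proof (rule injI)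
  fix lam mu assume eq: "shift_parts k m lam = shift_parts k m mu"
  then have len: "length lam = length mu"
    by (metis length_shift_parts)
  have "lam ! i = mu ! i" if "i < length lam" for i
    using arg_cong[OF eq, of "\<lambda>xs. xs ! i"] that len by (simp add: shift_parts_def split: if_splits)
  then show "lam = mu"
    using len by (simp add: list_eq_iff_nth_eq)
qed

lemma shift_parts_preimage:
  assumes "\<And>i. i < m \<Longrightarrow> i < length nu \<Longrightarrow> k \<le> nu ! i"
  obtains mu where "shift_parts k m mu = nu"
proof
  let ?mu = "map (\<lambda>i. if i < m then nu ! i - k else nu ! i) [0..<length nu]"
  show "shift_parts k m ?mu = nu"
    using assms by (intro nth_equalityI) (auto simp: shift_parts_def)
qed

lemma interlace_shift_parts:
  assumes "Suc l \<le> length lam" "length nu = length lam"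
    and "at_most_parts (Suc l) lam" "at_most_parts l nu"
  shows "interlace (shift_parts k (Suc l) lam) (shift_parts k l nu) \<longleftrightarrow> interlace lam nu"
proof -
  have "part (shift_parts k l nu) i \<le> part (shift_parts k (Suc l) lam) i
        \<and> part (shift_parts k (Suc l) lam) (i + 1) \<le> part (shift_parts k l nu) i
      \<longleftrightarrow> part nu i \<le> part lam i \<and> part lam (i + 1) \<le> part nu i" if "1 \<le> i" for i
  proof (cases "i \<le> l")
    case True
    then show ?thesis
      using assms(1,2) that by (simp add: part_shift_parts)
  next
    case False
    then show ?thesis
      using assms part_nonneg[of lam i] by (simp add: part_shift_parts at_most_parts_def)
  qed
  then show ?thesis
    using assms(2) by (simp add: interlace_def)
qed

lemma interlace_shift_parts_image:
  assumes "Suc l \<le> length lam" "at_most_parts (Suc l) lam"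
  shows "{nu. interlace (shift_parts k (Suc l) lam) nu \<and> at_most_parts l nu}
       = shift_parts k l ` {mu. interlace lam mu \<and> at_most_parts l mu}"
proof (intro equalityI subsetI)
  fix nu assume "nu \<in> {nu. interlace (shift_parts k (Suc l) lam) nu \<and> at_most_parts l nu}"
  then have il: "interlace (shift_parts k (Suc l) lam) nu" and nu: "at_most_parts l nu"
    by simp_all
  have len: "length nu = length lam"
    using interlace_length[OF il] by simp
  have "k \<le> nu ! i" if "i < l" "i < length nu" for i
  proof -
    have "part (shift_parts k (Suc l) lam) (Suc i + 1) \<le> part nu (Suc i)"
      using il that len unfolding interlace_def by auto
    then have "part lam (Suc i + 1) + int k \<le> part nu (Suc i)"
      using that assms(1) by (simp add: part_shift_parts)
    then show ?thesis
      using that part_nonneg[of lam "Suc i + 1"] by (simp add: part_def)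
  qed
  then obtain mu where mu: "shift_parts k l mu = nu"
    using shift_parts_preimage by blast
  have "length mu = length lam" "l \<le> length mu"
    using mu len assms(1) by auto
  then have "at_most_parts l mu" "interlace lam mu"
    using nu il mu assms interlace_shift_parts[of l lam mu k] at_most_parts_shift_parts[of l l mu k]
    by auto
  then show "nu \<in> shift_parts k l ` {mu. interlace lam mu \<and> at_most_parts l mu}"
    using mu by blast
next
  fix nu assume "nu \<in> shift_parts k l ` {mu. interlace lam mu \<and> at_most_parts l mu}"
  then obtain mu where nu: "nu = shift_parts k l mu" and "interlace lam mu" "at_most_parts l mu"
    by blast
  moreover have "length mu = length lam"
    using \<open>interlace lam mu\<close> by (rule interlace_length)
  ultimately show "nu \<in> {nu. interlace (shift_parts k (Suc l) lam) nu \<and> at_most_parts l nu}"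
    using assms interlace_shift_parts[of l lam mu k] at_most_parts_shift_parts[of l l mu k] by auto
qed

definition W1_poch :: "complex \<Rightarrow> complex \<Rightarrow> complex \<Rightarrow> complex \<Rightarrow> complex \<Rightarrow> complex
                       \<Rightarrow> nat list \<Rightarrow> nat list \<Rightarrow> complex" where
  "W1_poch x q p t a b lam mu =
     ppoch p q t (1 / x) lam * ppoch p q t (a * x) lam
       * ppoch p q t (q * b * x / t) mu * ppoch p q t (q * b / (a * x * t)) mu
     / (ppoch p q t (1 / x) mu * ppoch p q t (a * x) mu
       * ppoch p q t (q * b * x) lam * ppoch p q t (q * b / (a * x)) lam)"

definition W1_diag :: "complex \<Rightarrow> complex \<Rightarrow> complex \<Rightarrow> complex \<Rightarrow> nat list \<Rightarrow> nat list \<Rightarrow> nat \<Rightarrow> complex" where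
  "W1_diag p q t b lam mu i =
     E p (b * t powi (1 - 2 * int i) * q powi (2 * part mu i)) / E p (b * t powi (1 - 2 * int i))
     * thpoch p q (b * t powi (1 - 2 * int i)) (part mu i + part lam (i + 1))
     / thpoch p q (b * q * t powi (- 2 * int i)) (part mu i + part lam (i + 1))
     * t powi (int i * (part mu i - part lam (i + 1)))"

lemma W1_factors:
  "W1 x q p t a b lam mu =
     (if interlace lam mu
      then Hfac q p t b lam mu * W1_poch x q p t a b lam mu * (\<Prod>i\<in>{1..length lam}. W1_diag p q t b lam mu i)
      else 0)"
  by (simp add: W1_def W1_poch_def W1_diag_def)

lemma Hfac_shift_parts:
  assumes "Suc l \<le> length lam" "length nu = length lam"
    and "at_most_parts (Suc l) lam" "at_most_parts l nu" "q \<noteq> 0"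
  shows "Hfac q p t b (shift_parts k (Suc l) lam) (shift_parts k l nu) = Hfac q p t (b * q ^ (2 * k)) lam nu"
proof -
  have L: "part (shift_parts k (Suc l) lam) i = (if 1 \<le> i \<and> i \<le> Suc l then part lam i + int k else part lam i)" for i
    using assms(1) by (rule part_shift_parts)
  have M: "part (shift_parts k l nu) i = (if 1 \<le> i \<and> i \<le> l then part nu i + int k else part nu i)" for i
    using assms(1,2) by (simp add: part_shift_parts)
  have vanish: "i > Suc l \<Longrightarrow> part lam i = 0" "i > l \<Longrightarrow> part nu i = 0" for i
    using assms(3,4) by (auto simp: at_most_parts_def)
  have q_power: "q powi (2 * int k + w) = q powi w * q ^ (2 * k)" for w
    using assms(5) by (simp add: power_int_add flip: power_int_of_nat)
  have absorb: "q powi (2 * int k + w) * c * b = q powi w * c * (b * q ^ (2 * k))"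
    "q powi (2 * int k + w + 1) * c * b = q powi (w + 1) * c * (b * q ^ (2 * k))" for w c
    using q_power[of w] q_power[of "w + 1"] by (simp_all add: mult_ac add.assoc)
  (* For j <= l + 1 all parts involved are shifted by k: their differences are unchanged and
     q^(lam_i + lam_j) gains q^(2k), which is absorbed into b. For j > l + 1 every symbol has
     length mu_(j-1) - lam_j = 0. *)
  show ?thesis
    unfolding Hfac_def Let_def length_shift_parts
    apply (intro arg_cong2[where f="(*)"] prod.cong refl)
    subgoal for j i
      by (cases "j \<le> Suc l") (auto simp: L M vanish absorb)
    subgoal for j i
      by (cases "j \<le> Suc l") (auto simp: L M vanish absorb)
    done
qed

definition diagonal_factor :: "complex \<Rightarrow> complex \<Rightarrow> complex \<Rightarrow> complex \<Rightarrow> nat \<Rightarrow> nat \<Rightarrow> complex" where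
  "diagonal_factor p q t b k l =
     (\<Prod>i\<in>{1..l}. thpoch p q (q * b * t powi (1 - 2 * int i)) (2 * int k)
                 / thpoch p q (q * b * t powi (- 2 * int i)) (2 * int k))"

lemma W1_diag_shift_parts:
  assumes "Suc l \<le> length lam" "length nu = length lam"
    and "at_most_parts (Suc l) lam" "at_most_parts l nu"
    and "q \<noteq> 0" "t \<noteq> 0" "E_nonzero_on_orbit p q t b" "1 \<le> i"
  shows "W1_diag p q t b (shift_parts k (Suc l) lam) (shift_parts k l nu) i
       = (if i \<le> l
          then thpoch p q (q * b * t powi (1 - 2 * int i)) (2 * int k)
               / thpoch p q (q * b * t powi (- 2 * int i)) (2 * int k)
          else 1)
         * W1_diag p q t (b * q ^ (2 * k)) lam nu i"
proof -
  define c where "c = b * t powi (1 - 2 * int i)"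
  define d where "d = b * q * t powi (- 2 * int i)"
  define c' where "c' = c * q ^ (2 * k)"
  define d' where "d' = d * q ^ (2 * k)"
  have orbit: "E_nonzero_on_orbit p q t (b * t powi s * q powi r)" for s r
    using assms(7,5,6) by (rule E_nonzero_on_orbit_mult)
  have Ec: "E p c \<noteq> 0" "E p c' \<noteq> 0"
    using orbit[of "1 - 2 * int i" 0] orbit[of "1 - 2 * int i" "int (2 * k)", unfolded power_int_of_nat]
    by (simp_all add: c_def c'_def E_nonzero_on_orbitD mult_ac)
  have Wc': "W1_diag p q t (b * q ^ (2 * k)) lam nu i
      = E p (c' * q powi (2 * part nu i)) / E p c' * thpoch p q c' (part nu i + part lam (i + 1))
        / thpoch p q d' (part nu i + part lam (i + 1)) * t powi (int i * (part nu i - part lam (i + 1)))"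
    by (simp add: W1_diag_def c'_def d'_def c_def d_def mult_ac)
  show ?thesis
  proof (cases "i \<le> l")
    case True
    define M where "M = part nu i"
    define L where "L = part lam (i + 1)"
    have parts: "part (shift_parts k l nu) i = M + int k" "part (shift_parts k (Suc l) lam) (i + 1) = L + int k"
      using True assms(1,2,8) by (simp_all add: part_shift_parts M_def L_def)
    have nonneg: "M + L \<ge> 0"
      by (simp add: M_def L_def part_nonneg)
    have split_c: "thpoch p q c (M + int k + (L + int k)) = thpoch p q c (2 * int k) * thpoch p q c' (M + L)"
      using thpoch_add[of "2 * int k" "M + L" p q c] nonneg by (simp add: c'_def algebra_simps flip: power_int_of_nat)
    have split_d: "thpoch p q d (M + int k + (L + int k)) = thpoch p q d (2 * int k) * thpoch p q d' (M + L)"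
      using thpoch_add[of "2 * int k" "M + L" p q d] nonneg by (simp add: d'_def algebra_simps flip: power_int_of_nat)
    have E_shift: "c * q powi (2 * (M + int k)) = c' * q powi (2 * M)"
      using assms(5) by (simp add: c'_def distrib_left power_int_add mult_ac flip: power_int_of_nat)
    have ratio: "thpoch p q c (2 * int k) = thpoch p q (c * q) (2 * int k) * E p c / E p c'"
      using thpoch_shift_base[OF Ec(1), of q "2 * k"] Ec by (simp add: c'_def field_simps)
    have nz: "thpoch p q d (2 * int k) \<noteq> 0" "thpoch p q d' (M + L) \<noteq> 0"
      using thpoch_nonzero[OF orbit[of "- 2 * int i" 1]] thpoch_nonzero[OF orbit[of "- 2 * int i" "int (2 * k) + 1"]] nonneg
      by (simp_all add: d_def d'_def power_int_add mult_ac flip: power_int_of_nat)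
    have "W1_diag p q t b (shift_parts k (Suc l) lam) (shift_parts k l nu) i
        = E p (c * q powi (2 * (M + int k))) / E p c * thpoch p q c (M + int k + (L + int k))
          / thpoch p q d (M + int k + (L + int k)) * t powi (int i * (M + int k - (L + int k)))"
      unfolding W1_diag_def parts c_def[symmetric] d_def[symmetric] ..
    also have "\<dots> = E p (c' * q powi (2 * M)) / E p c * (thpoch p q c (2 * int k) * thpoch p q c' (M + L))
          / (thpoch p q d (2 * int k) * thpoch p q d' (M + L)) * t powi (int i * (M - L))"
      unfolding split_c split_d E_shift by simp
    also have "\<dots> = thpoch p q (c * q) (2 * int k) / thpoch p q d (2 * int k)
        * (E p (c' * q powi (2 * M)) / E p c' * thpoch p q c' (M + L) / thpoch p q d' (M + L) * t powi (int i * (M - L)))"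
      unfolding ratio using Ec nz by (simp add: field_simps)
    finally show ?thesis
      unfolding Wc' using True by (simp add: M_def L_def c_def d_def mult_ac)
  next
    case False
    then have "part (shift_parts k l nu) i = 0" "part (shift_parts k (Suc l) lam) (i + 1) = 0"
      "part nu i = 0" "part lam (i + 1) = 0"
      using assms(1-4) by (simp_all add: part_shift_parts at_most_parts_def)
    then show ?thesis
      using False Ec by (simp add: W1_diag_def Wc' c_def c'_def mult_ac)
  qed
qed

lemma prod_W1_diag_shift_parts:
  assumes "Suc l \<le> length lam" "length nu = length lam"
    and "at_most_parts (Suc l) lam" "at_most_parts l nu"
    and "q \<noteq> 0" "t \<noteq> 0" "E_nonzero_on_orbit p q t b"
  shows "(\<Prod>i\<in>{1..length lam}. W1_diag p q t b (shift_parts k (Suc l) lam) (shift_parts k l nu) i)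
       = diagonal_factor p q t b k l * (\<Prod>i\<in>{1..length lam}. W1_diag p q t (b * q ^ (2 * k)) lam nu i)"
proof -
  let ?f = "\<lambda>i. thpoch p q (q * b * t powi (1 - 2 * int i)) (2 * int k)
                 / thpoch p q (q * b * t powi (- 2 * int i)) (2 * int k)"
  have "(\<Prod>i\<in>{1..length lam}. W1_diag p q t b (shift_parts k (Suc l) lam) (shift_parts k l nu) i)
      = (\<Prod>i\<in>{1..length lam}. (if i \<le> l then ?f i else 1) * W1_diag p q t (b * q ^ (2 * k)) lam nu i)"
    using W1_diag_shift_parts[OF assms] by (intro prod.cong) auto
  also have "\<dots> = (\<Prod>i\<in>{1..length lam}. if i \<le> l then ?f i else 1)
      * (\<Prod>i\<in>{1..length lam}. W1_diag p q t (b * q ^ (2 * k)) lam nu i)"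
    by (rule prod.distrib)
  also have "(\<Prod>i\<in>{1..length lam}. if i \<le> l then ?f i else 1) = diagonal_factor p q t b k l"
  proof -
    have "{i \<in> {1..length lam}. i \<le> l} = {1..l}"
      using assms(1) by auto
    then show ?thesis
      unfolding diagonal_factor_def by (simp flip: prod.inter_filter)
  qed
  finally show ?thesis .
qed

lemma ppoch_replicate:
  "ppoch p q t c (replicate m k) = (\<Prod>i<m. thpoch p q (c * t powi (- int i)) (int k))"
proof -
  have "ppoch p q t c (replicate m k) = (\<Prod>i\<in>{1..m}. thpoch p q (c * t powi (1 - int i)) (int k))"
    unfolding ppoch_def by (intro prod.cong) (auto simp: part_def)
  then show ?thesis
    by (simp add: prod.atLeast1_atMost_eq)
qed

lemma ppoch_replicate_Suc:
  "ppoch p q t c (replicate (Suc l) k) = ppoch p q t c (replicate l k) * thpoch p q (c * t powi (- int l)) (int k)"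
  by (simp only: ppoch_replicate prod.lessThan_Suc)

lemma ppoch_replicate_Suc':
  assumes "t \<noteq> 0"
  shows "ppoch p q t c (replicate (Suc l) k) = thpoch p q c (int k) * ppoch p q t (c / t) (replicate l k)"
proof -
  have "c * t powi (- int (Suc i)) = c / t * t powi (- int i)" for i
    using assms by (simp add: power_int_minus_divide field_simps del: of_nat_Suc)
  then show ?thesis
    unfolding ppoch_replicate prod.lessThan_Suc_shift by simp
qed

lemma ppoch_shift_parts:
  assumes "m \<le> length lam" "at_most_parts m lam" "c' = c * q ^ k"
  shows "ppoch p q t c (shift_parts k m lam) = ppoch p q t c (replicate m k) * ppoch p q t c' lam"
proof -
  have factor: "thpoch p q (c * t powi (1 - int i)) (part (shift_parts k m lam) i)
      = (if i \<le> m then thpoch p q (c * t powi (1 - int i)) (int k) else 1)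
        * thpoch p q (c' * t powi (1 - int i)) (part lam i)" if "1 \<le> i" for i
  proof (cases "i \<le> m")
    case True
    then have "thpoch p q (c * t powi (1 - int i)) (part (shift_parts k m lam) i)
        = thpoch p q (c * t powi (1 - int i)) (int k + part lam i)"
      using assms(1) that by (simp add: part_shift_parts add.commute)
    also have "\<dots> = thpoch p q (c * t powi (1 - int i)) (int k) * thpoch p q (c' * t powi (1 - int i)) (part lam i)"
      using assms(3) by (simp add: thpoch_add part_nonneg mult_ac)
    finally show ?thesis
      using True by simp
  next
    case False
    then show ?thesis
      using assms(1,2) by (simp add: part_shift_parts at_most_parts_def)
  qed
  have "ppoch p q t c (shift_parts k m lam)
      = (\<Prod>i\<in>{1..length lam}. if i \<le> m then thpoch p q (c * t powi (1 - int i)) (int k) else 1)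
        * ppoch p q t c' lam"
    unfolding ppoch_def length_shift_parts prod.distrib[symmetric] by (rule prod.cong) (simp_all add: factor)
  also have "(\<Prod>i\<in>{1..length lam}. if i \<le> m then thpoch p q (c * t powi (1 - int i)) (int k) else 1)
      = ppoch p q t c (replicate m k)"
  proof -
    have "{i \<in> {1..length lam}. i \<le> m} = {1..m}"
      using assms(1) by auto
    then have "(\<Prod>i\<in>{1..length lam}. if i \<le> m then thpoch p q (c * t powi (1 - int i)) (int k) else 1)
        = (\<Prod>i\<in>{1..m}. thpoch p q (c * t powi (1 - int i)) (int k))"
      by (simp flip: prod.inter_filter)
    then show ?thesis
      by (simp add: ppoch_replicate prod.atLeast1_atMost_eq)
  qed
  finally show ?thesis .
qed

lemma ppoch_nonzero:
  assumes "E_nonzero_on_orbit p q t c" "q \<noteq> 0" "t \<noteq> 0"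
  shows "ppoch p q t c lam \<noteq> 0"
  unfolding ppoch_def
  using thpoch_nonzero[OF E_nonzero_on_orbit_mult[OF assms, of _ 0]] by (simp add: part_nonneg)

lemma W1_poch_shift_parts:
  assumes "Suc l \<le> length lam" "length nu = length lam"
    and "at_most_parts (Suc l) lam" "at_most_parts l nu" "q \<noteq> 0" "t \<noteq> 0"
    and "E_nonzero_on_orbit p q t (1 / x)" "E_nonzero_on_orbit p q t (a * x)"
    and "E_nonzero_on_orbit p q t (b * x)" "E_nonzero_on_orbit p q t (b / (a * x))"
  shows "W1_poch x q p t a b (shift_parts k (Suc l) lam) (shift_parts k l nu)
       = thpoch p q (1 / x * t powi (- int l)) (int k) * thpoch p q (a * x * t powi (- int l)) (int k)
         / (thpoch p q (q * b * x) (int k) * thpoch p q (q * b / (a * x)) (int k))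
         * W1_poch (x * q powi - int k) q p t (a * q ^ (2 * k)) (b * q ^ (2 * k)) lam nu"
proof -
  define x' where "x' = x * q powi - int k"
  define a' where "a' = a * q ^ (2 * k)"
  define b' where "b' = b * q ^ (2 * k)"
  let ?R = "\<lambda>c. ppoch p q t c (replicate l k)"
  let ?C = "?R (1 / x) * ?R (a * x) * ?R (q * b * x / t) * ?R (q * b / (a * x * t))"
  let ?N = "ppoch p q t (1 / x') lam * ppoch p q t (a' * x') lam
    * ppoch p q t (q * b' * x' / t) nu * ppoch p q t (q * b' / (a' * x' * t)) nu"
  let ?D = "ppoch p q t (1 / x') nu * ppoch p q t (a' * x') nu
    * ppoch p q t (q * b' * x') lam * ppoch p q t (q * b' / (a' * x')) lam"
  let ?u = "thpoch p q (1 / x * t powi (- int l)) (int k) * thpoch p q (a * x * t powi (- int l)) (int k)"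
  let ?v = "thpoch p q (q * b * x) (int k) * thpoch p q (q * b / (a * x)) (int k)"
  have q_k: "q powi - int k * q ^ (2 * k) = q ^ k"
    using assms(5) by (simp add: power_int_minus_divide power_mult power2_eq_square field_simps flip: mult_2)
  have args: "1 / x' = 1 / x * q ^ k" "a' * x' = a * x * q ^ k"
    "q * b' * x' / t = q * b * x / t * q ^ k" "q * b' / (a' * x' * t) = q * b / (a * x * t) * q ^ k"
    "q * b' * x' = q * b * x * q ^ k" "q * b' / (a' * x') = q * b / (a * x) * q ^ k"
    unfolding x'_def a'_def b'_def using q_k assms(5) by (simp_all add: power_int_minus_divide field_simps)
  have lam: "ppoch p q t c (shift_parts k (Suc l) lam) = ppoch p q t c (replicate (Suc l) k) * ppoch p q t c' lam"
    if "c' = c * q ^ k" for c c'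
    using assms(1,3) that by (rule ppoch_shift_parts)
  have nu: "ppoch p q t c (shift_parts k l nu) = ?R c * ppoch p q t c' nu"
    if "c' = c * q ^ k" for c c'
    using assms(1-2,4) that by (intro ppoch_shift_parts) auto
  have "q * b / (a * x) / t = q * b / (a * x * t)"
    by simp
  then have last_row: "ppoch p q t (q * b / (a * x)) (replicate (Suc l) k)
      = thpoch p q (q * b / (a * x)) (int k) * ?R (q * b / (a * x * t))"
    using ppoch_replicate_Suc'[OF assms(6)] by metis
  have "E_nonzero_on_orbit p q t (q * b * x / t)" "E_nonzero_on_orbit p q t (q * b / (a * x * t))"
    using E_nonzero_on_orbit_mult[OF assms(9) assms(5,6), of "- 1" 1]
      E_nonzero_on_orbit_mult[OF assms(10) assms(5,6), of "- 1" 1]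
    by (simp_all add: divide_inverse mult_ac)
  then have "?C \<noteq> 0"
    using assms(5-8) by (simp add: ppoch_nonzero)
  have "W1_poch x q p t a b (shift_parts k (Suc l) lam) (shift_parts k l nu) = ?C * (?u * ?N) / (?C * (?v * ?D))"
    unfolding W1_poch_def lam[OF args(1)] lam[OF args(2)] nu[OF args(3)]
      nu[OF args(4)] nu[OF args(1)] nu[OF args(2)]
      lam[OF args(5)] lam[OF args(6)]
      ppoch_replicate_Suc[of p q t "1 / x"] ppoch_replicate_Suc[of p q t "a * x"]
      ppoch_replicate_Suc'[OF assms(6), of p q "q * b * x"] last_row
    by (simp only: ac_simps)
  also have "\<dots> = ?u / ?v * (?N / ?D)"
    using \<open>?C \<noteq> 0\<close> by simp
  finally show ?thesis
    unfolding W1_poch_def x'_def a'_def b'_def .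
qed

lemma W1_shift_parts:
  assumes "Suc l \<le> length lam" "length nu = length lam"
    and "at_most_parts (Suc l) lam" "at_most_parts l nu" "q \<noteq> 0" "t \<noteq> 0"
    and "E_nonzero_on_orbit p q t b"
    and "E_nonzero_on_orbit p q t (1 / x)" "E_nonzero_on_orbit p q t (a * x)"
    and "E_nonzero_on_orbit p q t (b * x)" "E_nonzero_on_orbit p q t (b / (a * x))"
  shows "W1 x q p t a b (shift_parts k (Suc l) lam) (shift_parts k l nu)
       = thpoch p q (1 / x * t powi (- int l)) (int k) * thpoch p q (a * x * t powi (- int l)) (int k)
         / (thpoch p q (q * b * x) (int k) * thpoch p q (q * b / (a * x)) (int k))
         * diagonal_factor p q t b k l
         * W1 (x * q powi - int k) q p t (a * q ^ (2 * k)) (b * q ^ (2 * k)) lam nu"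
  unfolding W1_factors interlace_shift_parts[OF assms(1-4)] length_shift_parts
    Hfac_shift_parts[OF assms(1-5)] W1_poch_shift_parts[OF assms(1-6,8-11)]
    prod_W1_diag_shift_parts[OF assms(1-7)]
  by (simp add: mult_ac)

definition generic_variable :: "complex \<Rightarrow> complex \<Rightarrow> complex \<Rightarrow> complex \<Rightarrow> complex \<Rightarrow> complex \<Rightarrow> bool" where
  "generic_variable p q t a b y \<longleftrightarrow>
     E_nonzero_on_orbit p q t (1 / y) \<and> E_nonzero_on_orbit p q t (a * y)
     \<and> E_nonzero_on_orbit p q t (b * y) \<and> E_nonzero_on_orbit p q t (b / (a * y))"

definition variable_factor :: "complex \<Rightarrow> complex \<Rightarrow> complex \<Rightarrow> complex \<Rightarrow> nat \<Rightarrow> complex \<Rightarrow> complex" where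
  "variable_factor p q a b k y =
     thpoch p q (1 / y) (int k) * thpoch p q (a * y) (int k)
     / (thpoch p q (q * b * y) (int k) * thpoch p q (q * b / (a * y)) (int k))"

lemma W1_branch_shift_parts:
  assumes "Suc l \<le> length lam" "length nu = length lam"
    and "at_most_parts (Suc l) lam" "at_most_parts l nu" "q \<noteq> 0" "t \<noteq> 0"
    and "E_nonzero_on_orbit p q t b" "generic_variable p q t a b y"
  shows "W1 (y * t powi - int l) q p t (a * t ^ (2 * l)) (b * t ^ l) (shift_parts k (Suc l) lam) (shift_parts k l nu)
       = variable_factor p q a b k y * diagonal_factor p q t (b * t ^ l) k l
         * W1 (y * q powi - int k * t powi - int l) q p t (a * q ^ (2 * k) * t ^ (2 * l)) (b * q ^ (2 * k) * t ^ l) lam nu"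
proof -
  let ?x = "y * t powi - int l"
  define T where "T = t ^ l"
  have T: "t powi - int l = 1 / T" "t ^ (2 * l) = T * T" "t ^ l = T"
    by (simp_all add: T_def power_int_minus_divide flip: mult_2 power_add)
  have "T \<noteq> 0"
    using assms(6) by (simp add: T_def)
  have arg: "1 / ?x = 1 / y * t ^ l" "a * t ^ (2 * l) * ?x = a * y * t ^ l"
    "b * t ^ l * ?x = b * y" "b * t ^ l / (a * y * t ^ l) = b / (a * y)"
    unfolding T using \<open>T \<noteq> 0\<close> by (simp_all add: field_simps)
  have y: "E_nonzero_on_orbit p q t (1 / y)" "E_nonzero_on_orbit p q t (a * y)"
    "E_nonzero_on_orbit p q t (b * y)" "E_nonzero_on_orbit p q t (b / (a * y))"
    using assms(8) unfolding generic_variable_def by simp_all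
  have shift: "E_nonzero_on_orbit p q t (c * t ^ l)" if "E_nonzero_on_orbit p q t c" for c
    using E_nonzero_on_orbit_mult[OF that assms(5,6), of "int l" 0] by simp
  have orbit: "E_nonzero_on_orbit p q t (1 / ?x)" "E_nonzero_on_orbit p q t (a * t ^ (2 * l) * ?x)"
    "E_nonzero_on_orbit p q t (b * t ^ l * ?x)" "E_nonzero_on_orbit p q t (b * t ^ l / (a * t ^ (2 * l) * ?x))"
    "E_nonzero_on_orbit p q t (b * t ^ l)"
    unfolding arg by (intro shift y assms(7))+
  have factor_args: "1 / ?x * t powi (- int l) = 1 / y" "a * t ^ (2 * l) * ?x * t powi (- int l) = a * y"
    "q * (b * t ^ l) * ?x = q * b * y" "q * (b * t ^ l) / (a * t ^ (2 * l) * ?x) = q * b / (a * y)"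
    unfolding T using \<open>T \<noteq> 0\<close> by (simp_all add: field_simps)
  have factor: "thpoch p q (1 / ?x * t powi (- int l)) (int k) * thpoch p q (a * t ^ (2 * l) * ?x * t powi (- int l)) (int k)
      / (thpoch p q (q * (b * t ^ l) * ?x) (int k) * thpoch p q (q * (b * t ^ l) / (a * t ^ (2 * l) * ?x)) (int k))
      = variable_factor p q a b k y"
    unfolding variable_factor_def factor_args ..
  have reorder: "?x * q powi - int k = y * q powi - int k * t powi - int l"
    "a * t ^ (2 * l) * q ^ (2 * k) = a * q ^ (2 * k) * t ^ (2 * l)" "b * t ^ l * q ^ (2 * k) = b * q ^ (2 * k) * t ^ l"
    by (simp_all add: mult_ac)
  show ?thesis
    using W1_shift_parts[OF assms(1-6) orbit(5) orbit(1-4), of k] unfolding factor reorder .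
qed

lemma interlace_at_most_parts:
  assumes "interlace lam nu" "at_most_parts l nu"
  shows "at_most_parts (Suc l) lam"
  unfolding at_most_parts_def
proof (intro allI impI)
  fix i assume "i > Suc l"
  show "part lam i = 0"
  proof (cases "i \<le> length lam")
    case True
    then have "i - 1 \<in> {1..length lam}"
      using \<open>i > Suc l\<close> by auto
    then have "part lam (i - 1 + 1) \<le> part nu (i - 1)"
      using assms(1) unfolding interlace_def by blast
    then show ?thesis
      using assms(2) \<open>i > Suc l\<close> part_nonneg[of lam i] by (simp add: at_most_parts_def)
  next
    case False
    then show ?thesis
      by (simp add: part_def)
  qed
qed

lemma Wm_at_most_parts:
  assumes "zs \<noteq> []" "Wm zs q p t a b nu (replicate n 0) \<noteq> 0"
  shows "at_most_parts (length zs) nu"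
  using assms
proof (induction zs arbitrary: nu rule: list_nonempty_induct)
  case (single y)
  then have "interlace nu (replicate n 0)"
    by (auto simp: W1_def split: if_splits)
  moreover have "at_most_parts 0 (replicate n 0)"
    by (simp add: at_most_parts_def)
  ultimately show ?case
    using interlace_at_most_parts by fastforce
next
  case (cons y zs)
  then obtain z zs' where zs: "zs = z # zs'"
    by (cases zs) auto
  from cons.prems obtain nu' where "interlace nu nu'" "Wm zs q p t a b nu' (replicate n 0) \<noteq> 0"
    unfolding zs by (auto simp: Let_def elim: sum.not_neutral_contains_not_neutral)
  with cons.IH show ?case
    using interlace_at_most_parts by fastforce
qed

lemma sum_interlace_at_most_parts:
  assumes "zs \<noteq> []"
  shows "(\<Sum>nu\<in>{nu. interlace lam nu}. f nu * Wm zs q p t a b nu (replicate n 0))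
       = (\<Sum>nu\<in>{nu. interlace lam nu \<and> at_most_parts (length zs) nu}. f nu * Wm zs q p t a b nu (replicate n 0))"
proof -
  let ?g = "\<lambda>nu. f nu * Wm zs q p t a b nu (replicate n 0)"
  have "(\<Sum>nu\<in>{nu. interlace lam nu}. ?g nu)
      = (\<Sum>nu\<in>{nu. interlace lam nu}. if at_most_parts (length zs) nu then ?g nu else 0)"
    using Wm_at_most_parts[OF assms] by (intro sum.cong) auto
  also have "\<dots> = (\<Sum>nu\<in>{nu \<in> {nu. interlace lam nu}. at_most_parts (length zs) nu}. ?g nu)"
    by (rule sum.inter_filter[OF finite_interlace, symmetric])
  finally show ?thesis
    by simp
qed

lemma sum_interlace_shift_parts:
  assumes "Suc l \<le> length lam" "at_most_parts (Suc l) lam"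
  shows "(\<Sum>nu\<in>{nu. interlace (shift_parts k (Suc l) lam) nu \<and> at_most_parts l nu}. g nu)
       = (\<Sum>mu\<in>{mu. interlace lam mu \<and> at_most_parts l mu}. g (shift_parts k l mu))"
  unfolding interlace_shift_parts_image[OF assms]
  by (rule sum.reindex[OF inj_on_subset[OF inj_shift_parts subset_UNIV], unfolded comp_def])

lemma Wm_shift_parts:
  assumes "zs \<noteq> []" "length zs \<le> length lam" "at_most_parts (length zs) lam"
    and "q \<noteq> 0" "t \<noteq> 0" "E_nonzero_on_orbit p q t b" "\<forall>y\<in>set zs. generic_variable p q t a b y"
  shows "Wm zs q p t a b (shift_parts k (length zs) lam) (replicate (length lam) 0)
       = (\<Prod>i<length zs. variable_factor p q a b k (zs ! i)) * (\<Prod>j<length zs. diagonal_factor p q t (b * t ^ j) k j)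
         * Wm (map (\<lambda>x. x * q powi - int k) zs) q p t (a * q ^ (2 * k)) (b * q ^ (2 * k)) lam (replicate (length lam) 0)"
  using assms(1-3,7)
proof (induction zs arbitrary: lam rule: list_nonempty_induct)
  case (single y)
  have "at_most_parts 0 (replicate (length lam) 0)"
    by (simp add: at_most_parts_def)
  then show ?case
    using W1_branch_shift_parts[of 0 lam "replicate (length lam) 0" q t p b a y k] single assms(4-6)
    by simp
next
  case (cons y zs)
  define l where "l = length zs"
  obtain z zs' where zs: "zs = z # zs'"
    using cons.hyps by (cases zs) auto
  let ?f = "\<lambda>x. x * q powi - int k"
  let ?o = "replicate (length lam) 0"
  let ?a' = "a * q ^ (2 * k)" and ?b' = "b * q ^ (2 * k)"
  let ?C = "variable_factor p q a b k y * diagonal_factor p q t (b * t ^ l) k l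
    * ((\<Prod>i<l. variable_factor p q a b k (zs ! i)) * (\<Prod>j<l. diagonal_factor p q t (b * t ^ j) k j))"
  let ?W = "\<lambda>nu. W1 (y * t powi - int l) q p t (a * t ^ (2 * l)) (b * t ^ l) (shift_parts k (Suc l) lam) nu"
  let ?W' = "\<lambda>mu. W1 (?f y * t powi - int l) q p t (?a' * t ^ (2 * l)) (?b' * t ^ l) lam mu"
  define S where "S = {mu. interlace lam mu \<and> at_most_parts l mu}"
  have lam: "Suc l \<le> length lam" "at_most_parts (Suc l) lam"
    using cons.prems l_def by auto
  have step: "?W (shift_parts k l mu) * Wm zs q p t a b (shift_parts k l mu) ?o
      = ?C * (?W' mu * Wm (map ?f zs) q p t ?a' ?b' mu ?o)" if "mu \<in> S" for mu
  proof -
    have mu: "length mu = length lam" "at_most_parts l mu"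
      using that interlace_length by (auto simp: S_def)
    have "Wm zs q p t a b (shift_parts k l mu) ?o
        = (\<Prod>i<l. variable_factor p q a b k (zs ! i)) * (\<Prod>j<l. diagonal_factor p q t (b * t ^ j) k j)
          * Wm (map ?f zs) q p t ?a' ?b' mu ?o"
      using cons.IH[of mu] cons.prems mu lam(1) l_def by auto
    then show ?thesis
      using W1_branch_shift_parts[OF lam(1) mu(1) lam(2) mu(2) assms(4-6), of a y k] cons.prems
      by (simp add: mult_ac)
  qed
  have "Wm (y # zs) q p t a b (shift_parts k (Suc l) lam) ?o
      = (\<Sum>nu\<in>{nu. interlace (shift_parts k (Suc l) lam) nu \<and> at_most_parts l nu}. ?W nu * Wm zs q p t a b nu ?o)"
    using sum_interlace_at_most_parts[OF cons.hyps(1)] by (simp add: zs l_def Let_def)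
  also have "\<dots> = (\<Sum>mu\<in>S. ?W (shift_parts k l mu) * Wm zs q p t a b (shift_parts k l mu) ?o)"
    unfolding S_def by (rule sum_interlace_shift_parts[OF lam])
  also have "\<dots> = ?C * (\<Sum>mu\<in>S. ?W' mu * Wm (map ?f zs) q p t ?a' ?b' mu ?o)"
    using step by (simp add: sum_distrib_left)
  also have "(\<Sum>mu\<in>S. ?W' mu * Wm (map ?f zs) q p t ?a' ?b' mu ?o) = Wm (map ?f (y # zs)) q p t ?a' ?b' lam ?o"
    using sum_interlace_at_most_parts[where zs="map ?f zs" and lam=lam] cons.hyps(1) by (simp add: zs S_def l_def Let_def)
  finally have "Wm (y # zs) q p t a b (shift_parts k (Suc l) lam) ?o
      = ?C * Wm (map ?f (y # zs)) q p t ?a' ?b' lam ?o" .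
  moreover have "(\<Prod>i<Suc l. variable_factor p q a b k ((y # zs) ! i))
      = variable_factor p q a b k y * (\<Prod>i<l. variable_factor p q a b k (zs ! i))"
    by (simp add: prod.lessThan_Suc_shift del: prod.lessThan_Suc)
  ultimately show ?case
    unfolding length_Cons l_def[symmetric] by (simp add: ac_simps)
qed

lemma prod_triangle_telescope:
  fixes c :: "int \<Rightarrow> 'a::field"
  assumes "\<And>s. c s \<noteq> 0"
  shows "(\<Prod>j<n. \<Prod>i\<in>{1..j}. c (int j + 1 - 2 * int i) / c (int j - 2 * int i))
       = (\<Prod>i\<in>{1..n - 1}. c (int n - 2 * int i)) / (\<Prod>i\<in>{1..n - 1}. c (- int i))"
proof (induction n)
  case 0
  then show ?case
    by simp
next
  case (Suc n)
  show ?case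
  proof (cases n)
    case 0
    then show ?thesis
      by simp
  next
    case (Suc m)
    let ?N = "\<Prod>i\<in>{1..m}. c (int n - 2 * int i)"
    let ?D = "\<Prod>i\<in>{1..m}. c (- int i)"
    have "?N \<noteq> 0" "?D \<noteq> 0"
      using assms by simp_all
    have row: "(\<Prod>i\<in>{1..n}. c (int n + 1 - 2 * int i) / c (int n - 2 * int i))
        = (\<Prod>i\<in>{1..n}. c (int n + 1 - 2 * int i)) / (?N * c (- int n))"
      unfolding prod_dividef using Suc by simp
    have "(\<Prod>j<Suc n. \<Prod>i\<in>{1..j}. c (int j + 1 - 2 * int i) / c (int j - 2 * int i))
        = ?N / ?D * ((\<Prod>i\<in>{1..n}. c (int n + 1 - 2 * int i)) / (?N * c (- int n)))"
      using Suc.IH Suc row by simp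
    also have "\<dots> = (\<Prod>i\<in>{1..n}. c (int n + 1 - 2 * int i)) / (?D * c (- int n))"
      using \<open>?N \<noteq> 0\<close> \<open>?D \<noteq> 0\<close> assms by (simp add: field_simps)
    finally show ?thesis
      using Suc by simp
  qed
qed

lemma prod_cancel_negative_exponents:
  fixes c :: "int \<Rightarrow> 'a::field"
  assumes "\<And>s. c s \<noteq> 0"
  shows "(\<Prod>i\<in>{1..n - 1}. c (int n - 2 * int i)) / (\<Prod>i\<in>{1..n - 1}. c (- int i))
       = (\<Prod>j\<in>{1..n div 2}. c (int n - 2 * int j) / c (- 1 - int n + 2 * int j))"
proof (induction n rule: nat_less_induct)
  case (1 n)
  show ?case
  proof (cases "n < 2")
    case True
    then show ?thesis
      by (cases n) auto
  next
    case False
    then obtain m where n: "n = Suc (Suc m)"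
      by (metis add_2_eq_Suc le_Suc_ex not_less)
    let ?V = "\<lambda>n. \<Prod>j\<in>{1..n div 2}. c (int n - 2 * int j) / c (- 1 - int n + 2 * int j)"
    have IH: "(\<Prod>i\<in>{1..m - 1}. c (int m - 2 * int i)) / (\<Prod>i\<in>{1..m - 1}. c (- int i)) = ?V m"
      using "1.IH" n by simp
    have V: "?V n = c (int m) / c (- 1 - int m) * ?V m"
    proof -
      have half: "n div 2 = Suc (m div 2)"
        using n by simp
      show ?thesis
        unfolding half One_nat_def prod.atLeast1_atMost_eq prod.lessThan_Suc_shift using n by (simp add: algebra_simps)
    qed
    show ?thesis
    proof (cases m)
      case 0
      then show ?thesis
        using n by simp
    next
      case (Suc m')
      let ?N = "\<Prod>i\<in>{1..m'}. c (int m - 2 * int i)"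
      let ?D = "\<Prod>i\<in>{1..m'}. c (- int i)"
      have num: "(\<Prod>i\<in>{1..n - 1}. c (int n - 2 * int i)) = c (int m) * ?N * c (- int m)"
      proof -
        have "n - 1 = Suc (Suc m')"
          using n Suc by simp
        then have "(\<Prod>i\<in>{1..n - 1}. c (int n - 2 * int i)) = (\<Prod>i<Suc (Suc m'). c (int n - 2 * int (Suc i)))"
          by (simp only: One_nat_def prod.atLeast1_atMost_eq)
        also have "\<dots> = c (int n - 2) * ((\<Prod>i<m'. c (int n - 2 * int (Suc (Suc i)))) * c (int n - 2 * int (Suc (Suc m'))))"
          by (subst prod.lessThan_Suc_shift, subst prod.lessThan_Suc) simp
        finally show ?thesis
          using n Suc by (simp add: One_nat_def prod.atLeast1_atMost_eq algebra_simps)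
      qed
      have den: "(\<Prod>i\<in>{1..n - 1}. c (- int i)) = ?D * c (- int m) * c (- 1 - int m)"
        using n Suc by (simp add: algebra_simps)
      have "?D \<noteq> 0"
        using assms by simp
      then have "(\<Prod>i\<in>{1..n - 1}. c (int n - 2 * int i)) / (\<Prod>i\<in>{1..n - 1}. c (- int i))
          = c (int m) / c (- 1 - int m) * (?N / ?D)"
        unfolding num den using assms by (simp add: field_simps)
      also have "?N / ?D = ?V m"
        using IH Suc by simp
      finally show ?thesis
        unfolding V .
    qed
  qed
qed

lemma generic_E_nonzero:
  assumes "generic p q t a b xs" "length r = length xs"
    and "(i, j, k, l, r) \<noteq> (0, 0, 0, 0, replicate (length xs) 0)"
  shows "E p (q powi i * t powi j * a powi k * b powi l * (\<Prod>m<length xs. (xs ! m) powi (r ! m))) \<noteq> 0"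
  using assms unfolding generic_def by blast

lemma generic_E_nonzero_on_orbit:
  assumes "generic p q t a b xs" "length r = length xs"
    and "(\<alpha>, \<beta>, r) \<noteq> (0, 0, replicate (length xs) 0)"
  shows "E_nonzero_on_orbit p q t (a powi \<alpha> * b powi \<beta> * (\<Prod>m<length xs. (xs ! m) powi (r ! m)))"
  unfolding E_nonzero_on_orbit_def
proof (intro allI)
  fix s r'
  have "E p (q powi r' * t powi s * a powi \<alpha> * b powi \<beta> * (\<Prod>m<length xs. (xs ! m) powi (r ! m))) \<noteq> 0"
    using assms by (intro generic_E_nonzero) auto
  then show "E p (a powi \<alpha> * b powi \<beta> * (\<Prod>m<length xs. (xs ! m) powi (r ! m)) * t powi s * q powi r') \<noteq> 0"
    by (simp add: mult_ac)
qed

lemma generic_E_nonzero_on_orbit_b: "generic p q t a b xs \<Longrightarrow> E_nonzero_on_orbit p q t b"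
  using generic_E_nonzero_on_orbit[of p q t a b xs "replicate (length xs) 0" 0 1] by simp

lemma generic_E_nonzero_on_orbit_variable:
  assumes "generic p q t a b xs" "j < length xs" "e \<noteq> 0"
  shows "E_nonzero_on_orbit p q t (a powi \<alpha> * b powi \<beta> * (xs ! j) powi e)"
proof -
  let ?r = "(replicate (length xs) 0)[j := e]"
  have "(\<Prod>m<length xs. (xs ! m) powi (?r ! m)) = (\<Prod>m<length xs. if m = j then (xs ! j) powi e else 1)"
    by (rule prod.cong) (auto simp: nth_list_update)
  also have "\<dots> = (xs ! j) powi e"
    using assms(2) by simp
  moreover have "?r \<noteq> replicate (length xs) 0"
    using assms(2,3) by (metis length_replicate nth_list_update_eq nth_replicate)
  ultimately show ?thesis
    using generic_E_nonzero_on_orbit[OF assms(1), of ?r \<alpha> \<beta>] by simp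
qed

lemma generic_variable_if_generic:
  assumes "generic p q t a b xs" "y \<in> set xs"
  shows "generic_variable p q t a b y"
proof -
  obtain j where j: "j < length xs" "y = xs ! j"
    using assms(2) by (auto simp: in_set_conv_nth)
  show ?thesis
    unfolding generic_variable_def
    using generic_E_nonzero_on_orbit_variable[OF assms(1) j(1), of "- 1" 0 0] generic_E_nonzero_on_orbit_variable[OF assms(1) j(1), of 1 1 0]
      generic_E_nonzero_on_orbit_variable[OF assms(1) j(1), of 1 0 1] generic_E_nonzero_on_orbit_variable[OF assms(1) j(1), of "- 1" "- 1" 1]
    by (simp_all add: j(2) power_int_minus divide_inverse mult_ac)
qed

lemma sorted_wrt_ge_last_le:
  fixes xs :: "'a::order list"
  assumes "sorted_wrt (\<ge>) xs" "xs \<noteq> []" "x \<in> set xs"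
  shows "last xs \<le> x"
proof -
  have "sorted_wrt (\<ge>) (butlast xs @ [last xs])" "x \<in> set (butlast xs @ [last xs])"
    using assms by simp_all
  then show ?thesis
    by (auto simp: sorted_wrt_append)
qed

lemma shift_parts_map_diff:
  assumes "\<forall>x\<in>set lam. k \<le> x"
  shows "shift_parts k (length lam) (map (\<lambda>x. x - k) lam) = lam"
  using assms by (intro nth_equalityI) (auto simp: shift_parts_def)

theorem mainTheorem6:
  fixes p q t a b :: complex and lam :: "nat list" and k :: nat and xs :: "complex list"
  assumes "norm p < 1"
    and "generic p q t a b xs"
    and "sorted_wrt (\<ge>) lam"
    and "lam \<noteq> []"
    and "last lam \<noteq> 0"
    and "k \<le> last lam"
    and "length xs = length lam"
  shows "W xs q p t a b lam =
    (\<Prod>j\<in>{1..length lam div 2}.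
        thpoch p q (q * b * t powi (int (length lam) - 2 * int j)) (2 * int k)
        / thpoch p q (q * b * t powi (- 1 - int (length lam) + 2 * int j)) (2 * int k))
    * (\<Prod>i<length lam.
        thpoch p q (1 / xs ! i) (int k) * thpoch p q (a * xs ! i) (int k)
        / (thpoch p q (q * b * xs ! i) (int k) * thpoch p q (q * b / (a * xs ! i)) (int k)))
    * W (map (\<lambda>x. x * q powi (- int k)) xs) q p t (a * q ^ (2 * k)) (b * q ^ (2 * k))
        (map (\<lambda>l. l - k) lam)"
proof -
  let ?n = "length lam" and ?lam' = "map (\<lambda>l. l - k) lam"
  define c where "c s = thpoch p q (q * b * t powi s) (2 * int k)" for s
  have q: "q \<noteq> 0" and t: "t \<noteq> 0"
    using assms(2) by (simp_all add: generic_def)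
  have b: "E_nonzero_on_orbit p q t b"
    using assms(2) by (rule generic_E_nonzero_on_orbit_b)
  have c_nonzero: "c s \<noteq> 0" for s
    using thpoch_nonzero[OF E_nonzero_on_orbit_mult[OF b q t, of s 1]] by (simp add: c_def mult_ac)
  have diagonal: "diagonal_factor p q t (b * t ^ j) k j
      = (\<Prod>i\<in>{1..j}. c (int j + 1 - 2 * int i) / c (int j - 2 * int i))" for j
  proof -
    have shift: "q * (b * t ^ j) * t powi s = q * b * t powi (int j + s)" for s
      using t by (simp add: power_int_add mult_ac)
    show ?thesis
      unfolding diagonal_factor_def shift c_def by (simp add: algebra_simps)
  qed
  have "W xs q p t a b lam = Wm xs q p t a b (shift_parts k (length xs) ?lam') (replicate (length ?lam') 0)"
    using shift_parts_map_diff[of lam k] sorted_wrt_ge_last_le[OF assms(3,4)] assms(6,7)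
    by (force simp: W_def)
  also have "\<dots> = (\<Prod>i<?n. variable_factor p q a b k (xs ! i)) * (\<Prod>j<?n. diagonal_factor p q t (b * t ^ j) k j)
      * W (map (\<lambda>x. x * q powi - int k) xs) q p t (a * q ^ (2 * k)) (b * q ^ (2 * k)) ?lam'"
  proof -
    have "xs \<noteq> []" "length xs \<le> length ?lam'" "at_most_parts (length xs) ?lam'"
      using assms(4,7) by (auto simp: at_most_parts_def part_def)
    then show ?thesis
      using Wm_shift_parts[where zs=xs and lam="?lam'" and k=k, OF _ _ _ q t b]
        generic_variable_if_generic[OF assms(2)] assms(7)
      by (simp add: W_def)
  qed
  also have "(\<Prod>j<?n. diagonal_factor p q t (b * t ^ j) k j)
      = (\<Prod>j\<in>{1..?n div 2}. c (int ?n - 2 * int j) / c (- 1 - int ?n + 2 * int j))"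
    unfolding diagonal
    by (rule trans[OF prod_triangle_telescope prod_cancel_negative_exponents]) (rule c_nonzero)+
  finally show ?thesis
    by (simp add: variable_factor_def c_def mult_ac)
qed

end
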